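(* Let $U$ be a compact right topological semigroup and let $M$ be a finite almost R-trivial monoid acting on $U$ by continuous endomorphisms. Then there exists a function $g\colon \mathbb{Y}(M)\to E(U)$ such that (i) $g$ is $M$-equivariant; (ii) $g$ is order reversing, i.e. $x\leq_{\mathbb{Y}(M)} y$ implies $g(y)\leq^U g(x)$; (iii) $g$ maps maximal elements of $\mathbb{Y}(M)$ into $I(U)$. Moreover, if $\mathbb{X}(M)$ has at most two elements, then $g$ maps maximal elements of $\mathbb{Y}(M)$ to elements of $E(U)$ that are minimal with respect to $\leq^U$.
   Context: A monoid $M$ acts on $U$ by continuous endomorphisms if there is an action $(a,u)\mapsto a(u)$ of $M$ on $U$, with $1_M$ acting as the identity, such that each map $u\mapsto a(u)$ is a continuous semigroup endomorphism of $U$. A semigroup $U$ with a topology is right topological if for each $u\in U$ the map $x\mapsto xu$ is continuous. $E(U)$ is the set of idempotents of $U$; $u\leq^U v$ means $uv=vu=u$. $I(U)$ denotes the smallest compact two-sided ideal of $U$. Elements $a,b$ of $M$ are R-equivalent if $aM=bM$; $M$ is almost R-trivial if for every $b\in M$ whose R-equivalence class has more than one element, $ab=b$ for all $a\in M$. $\mathbb{X}(M)=\{aM: a\in M\}$ ordered by inclusion, with $M$ acting by $b\cdot aM=baM$. $\mathbb{Y}(M)$ is the set of non-empty subsets of $\mathbb{X}(M)$ that are linearly ordered by inclusion, ordered by: $x\leq_{\mathbb{Y}(M)} y$ iff $x\subseteq y$ and every element of $x$ is strictly included in every element of $y\setminus x$; $M$ acts on $\mathbb{Y}(M)$ by $a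 x=\{a\cdot i : i\in x\}$. *)

theory Defs
  imports "HOL-Analysis.Analysis"
begin

definition semigroup_on :: "'u set \<Rightarrow> ('u \<Rightarrow> 'u \<Rightarrow> 'u) \<Rightarrow> bool" where
  "semigroup_on U mul \<longleftrightarrow>
     (\<forall>x\<in>U. \<forall>y\<in>U. mul x y \<in> U) \<and>
     (\<forall>x\<in>U. \<forall>y\<in>U. \<forall>z\<in>U. mul (mul x y) z = mul x (mul y z))"

definition compact_right_topological_semigroup ::
  "'u topology \<Rightarrow> ('u \<Rightarrow> 'u \<Rightarrow> 'u) \<Rightarrow> bool" where
  "compact_right_topological_semigroup T mul \<longleftrightarrow>
     semigroup_on (topspace T) mul \<and>
     topspace T \<noteq> {} \<and>
     compact_space T \<and> Hausdorff_space T \<and>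
     (\<forall>u\<in>topspace T. continuous_map T T (\<lambda>x. mul x u))"

definition idempotents :: "'u set \<Rightarrow> ('u \<Rightarrow> 'u \<Rightarrow> 'u) \<Rightarrow> 'u set" where
  "idempotents U mul = {e \<in> U. mul e e = e}"

definition idem_le :: "('u \<Rightarrow> 'u \<Rightarrow> 'u) \<Rightarrow> 'u \<Rightarrow> 'u \<Rightarrow> bool" where
  "idem_le mul u v \<longleftrightarrow> mul u v = u \<and> mul v u = u"

definition two_sided_ideal :: "'u set \<Rightarrow> ('u \<Rightarrow> 'u \<Rightarrow> 'u) \<Rightarrow> 'u set \<Rightarrow> bool" where
  "two_sided_ideal U mul I \<longleftrightarrow> I \<noteq> {} \<and> I \<subseteq> U \<and>
     (\<forall>u\<in>U. \<forall>i\<in>I. mul u i \<in> I \<and> mul i u \<in> I)"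

definition smallest_compact_ideal :: "'u topology \<Rightarrow> ('u \<Rightarrow> 'u \<Rightarrow> 'u) \<Rightarrow> 'u set" where
  "smallest_compact_ideal T mul =
     (THE I. two_sided_ideal (topspace T) mul I \<and> compactin T I \<and>
        (\<forall>J. two_sided_ideal (topspace T) mul J \<and> compactin T J \<longrightarrow> I \<subseteq> J))"

definition acts_by_continuous_endomorphisms ::
  "'u topology \<Rightarrow> ('u \<Rightarrow> 'u \<Rightarrow> 'u) \<Rightarrow> ('m::monoid_mult \<Rightarrow> 'u \<Rightarrow> 'u) \<Rightarrow> bool" where
  "acts_by_continuous_endomorphisms T mul act \<longleftrightarrow>
     (\<forall>u\<in>topspace T. act 1 u = u) \<and>
     (\<forall>a b. \<forall>u\<in>topspace T. act (a * b) u = act a (act b u)) \<and>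
     (\<forall>a. continuous_map T T (act a)) \<and>
     (\<forall>a. \<forall>u\<in>topspace T. \<forall>v\<in>topspace T. act a (mul u v) = mul (act a u) (act a v))"

definition R_equiv :: "'m::monoid_mult \<Rightarrow> 'm \<Rightarrow> bool" where
  "R_equiv a b \<longleftrightarrow> range ((*) a) = range ((*) b)"

definition almost_R_trivial :: "'m::monoid_mult itself \<Rightarrow> bool" where
  "almost_R_trivial _ \<longleftrightarrow>
     (\<forall>b::'m. (\<exists>c. c \<noteq> b \<and> R_equiv c b) \<longrightarrow> (\<forall>a. a * b = b))"

definition XX :: "'m::monoid_mult set set" where
  "XX = {range ((*) a) | a. True}"

definition X_act :: "'m::monoid_mult \<Rightarrow> 'm set \<Rightarrow> 'm set" where
  "X_act b i = (*) b ` i"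

definition YY :: "'m::monoid_mult set set set" where
  "YY = {x. x \<noteq> {} \<and> x \<subseteq> XX \<and> (\<forall>i\<in>x. \<forall>j\<in>x. i \<subseteq> j \<or> j \<subseteq> i)}"

definition Y_le :: "'m::monoid_mult set set \<Rightarrow> 'm set set \<Rightarrow> bool" where
  "Y_le x y \<longleftrightarrow> x \<subseteq> y \<and> (\<forall>i\<in>x. \<forall>j\<in>y - x. i \<subset> j)"

definition Y_act :: "'m::monoid_mult \<Rightarrow> 'm set set \<Rightarrow> 'm set set" where
  "Y_act a x = {X_act a i | i. i \<in> x}"

definition Y_maximal :: "'m::monoid_mult set set \<Rightarrow> bool" where
  "Y_maximal y \<longleftrightarrow> y \<in> YY \<and> (\<forall>z\<in>YY. Y_le y z \<longrightarrow> z = y)"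

end

theory Submission
  imports Defs
begin

text \<open>The map is assembled from a map \<open>h : \<Y>(M) \<rightarrow> E(U)\<close> that is equivariant, sends
  chains containing M into I(U), and is coherent: \<open>h(y) h(y\<^sup>-) = h(y)\<close>, where \<open>y\<^sup>-\<close>
  is y with its top removed. Such maps are found by induction on the length of the chain, each
  step taking an idempotent (Ellis--Numakura) of a compact subsemigroup of the product
  \<open>U\<^bsup>\<Y>(M)\<^esup>\<close>; the induction starts from \<open>y \<mapsto> a(e\<^sub>0)\<close>, where aM is the top
  of y and \<open>e\<^sub>0\<close> is a minimal idempotent of U on which all right zeros of M agree (they are
  the only elements with a non-trivial R-class, so this is well defined). The ordered product
  \<open>g(y) = h(y\<^sub>1) \<cdots> h(y\<^sub>n)\<close> along the chain \<open>y\<^sub>1 \<subset> \<dots> \<subset> y\<^sub>n = y\<close> is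
  then idempotent, equivariant and order reversing. If \<open>\<X>(M)\<close> has at most two elements, every
  element of M is right invertible or a right zero, and already \<open>y \<mapsto> a(e\<^sub>0)\<close> works.\<close>

section \<open>Compact right topological semigroups\<close>

definition compact_rt_subsemigroup :: "'a topology \<Rightarrow> ('a \<Rightarrow> 'a \<Rightarrow> 'a) \<Rightarrow> 'a set \<Rightarrow> bool" where
  "compact_rt_subsemigroup X mul S \<longleftrightarrow>
     compactin X S \<and> S \<noteq> {} \<and>
     (\<forall>x\<in>S. \<forall>y\<in>S. mul x y \<in> S) \<and>
     (\<forall>x\<in>S. \<forall>y\<in>S. \<forall>z\<in>S. mul (mul x y) z = mul x (mul y z)) \<and>
     (\<forall>s\<in>S. continuous_map X X (\<lambda>x. mul x s))"

lemma compact_rt_subsemigroup_subset: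
  assumes "compact_rt_subsemigroup X mul S" and "S' \<subseteq> S" and "compactin X S'" and "S' \<noteq> {}"
    and "\<And>x y. x \<in> S' \<Longrightarrow> y \<in> S' \<Longrightarrow> mul x y \<in> S'"
  shows "compact_rt_subsemigroup X mul S'"
  using assms unfolding compact_rt_subsemigroup_def by (simp add: subset_iff)

lemma chain_compactin_Inter_nonempty:
  assumes X: "Hausdorff_space X" and "\<C> \<noteq> {}"
    and compact: "\<And>A. A \<in> \<C> \<Longrightarrow> compactin X A \<and> A \<noteq> {}"
    and chain: "\<And>A B. A \<in> \<C> \<Longrightarrow> B \<in> \<C> \<Longrightarrow> A \<subseteq> B \<or> B \<subseteq> A"
  shows "\<Inter>\<C> \<noteq> {}"
proof -
  obtain A0 where A0: "A0 \<in> \<C>" using \<open>\<C> \<noteq> {}\<close> by blast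
  have "A0 \<inter> \<Inter>\<F> \<noteq> {}" if "finite \<F>" "\<F> \<subseteq> \<C>" for \<F>
  proof -
    have "subset.chain UNIV (insert A0 \<F>)"
      using A0 that chain unfolding subset_chain_def by blast
    then have "\<Inter>(insert A0 \<F>) \<in> insert A0 \<F>"
      using that by (intro Inter_in_chain) auto
    then show ?thesis using A0 that compact by fastforce
  qed
  moreover have "\<forall>A\<in>\<C>. closedin X A"
    using compact compactin_imp_closedin[OF X] by blast
  ultimately have "A0 \<inter> \<Inter>\<C> \<noteq> {}"
    using compact[OF A0] unfolding compactin_fip by blast
  then show ?thesis by blast
qed

text \<open>Zorn's lemma for reverse inclusion: chains of nonempty compact sets have nonempty
  intersections, which are lower bounds as soon as P survives them.\<close>
lemma compactin_minimal_exists: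
  assumes X: "Hausdorff_space X" and "P A0"
    and compact: "\<And>A. P A \<Longrightarrow> compactin X A \<and> A \<noteq> {}"
    and chain_Inter: "\<And>\<C>. \<C> \<noteq> {} \<Longrightarrow> (\<forall>A\<in>\<C>. P A) \<Longrightarrow> (\<forall>A\<in>\<C>. \<forall>B\<in>\<C>. A \<subseteq> B \<or> B \<subseteq> A)
                 \<Longrightarrow> \<Inter>\<C> \<noteq> {} \<Longrightarrow> P (\<Inter>\<C>)"
  shows "\<exists>A. P A \<and> A \<subseteq> A0 \<and> (\<forall>B. P B \<longrightarrow> B \<subseteq> A \<longrightarrow> B = A)"
proof -
  define \<A> where "\<A> = {A. P A \<and> A \<subseteq> A0}"
  have "\<exists>M\<in>\<A>. \<forall>A\<in>\<A>. (\<lambda>A B. B \<subseteq> A) M A \<longrightarrow> A = M"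
  proof (rule predicate_Zorn)
    show "partial_order_on \<A> (relation_of (\<lambda>A B. B \<subseteq> A) \<A>)"
      by (rule partial_order_on_relation_ofI) auto
  next
    fix \<C> assume "\<C> \<in> Chains (relation_of (\<lambda>A B. B \<subseteq> A) \<A>)"
    then have sub: "\<C> \<subseteq> \<A>" and chain: "\<forall>A\<in>\<C>. \<forall>B\<in>\<C>. A \<subseteq> B \<or> B \<subseteq> A"
      unfolding Chains_def relation_of_def by auto
    show "\<exists>L\<in>\<A>. \<forall>A\<in>\<C>. L \<subseteq> A"
    proof (cases "\<C> = {}")
      case True
      then show ?thesis using \<open>P A0\<close> unfolding \<A>_def by blast
    next
      case False
      have P: "\<forall>A\<in>\<C>. P A" and "\<Inter>\<C> \<subseteq> A0"
        using sub False unfolding \<A>_def by auto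
      then have "\<Inter>\<C> \<noteq> {}"
        using chain_compactin_Inter_nonempty[OF X False] compact chain by blast
      then have "\<Inter>\<C> \<in> \<A>"
        using chain_Inter[OF False P chain] \<open>\<Inter>\<C> \<subseteq> A0\<close> unfolding \<A>_def by blast
      then show ?thesis by blast
    qed
  qed
  then obtain M where "P M" "M \<subseteq> A0" and "\<And>B. P B \<Longrightarrow> B \<subseteq> A0 \<Longrightarrow> B \<subseteq> M \<Longrightarrow> B = M"
    unfolding \<A>_def by auto
  then show ?thesis by blast
qed

lemma compact_rt_subsemigroup_chain_Inter:
  assumes X: "Hausdorff_space X" and "\<C> \<noteq> {}" and \<C>: "\<forall>A\<in>\<C>. compact_rt_subsemigroup X mul A"
    and "\<Inter>\<C> \<noteq> {}"
  shows "compact_rt_subsemigroup X mul (\<Inter>\<C>)"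
proof -
  obtain K where K: "K \<in> \<C>" using \<open>\<C> \<noteq> {}\<close> by blast
  have "compactin X A" if "A \<in> \<C>" for A
    using \<C> that unfolding compact_rt_subsemigroup_def by blast
  then have "compactin X (\<Inter>\<C>)"
    using K compactin_imp_closedin[OF X] by (metis closed_compactin_Inter)
  moreover have "\<Inter>\<C> \<subseteq> K" using K by blast
  ultimately show ?thesis
    using \<C> K \<open>\<Inter>\<C> \<noteq> {}\<close> unfolding compact_rt_subsemigroup_def by (simp add: subset_iff)
qed

text \<open>Ellis--Numakura lemma. A minimal compact subsemigroup A equals both Aa and
  \<open>{x \<in> A. x a = a}\<close> for every \<open>a \<in> A\<close>; the latter says that a is idempotent.\<close>
theorem compact_rt_subsemigroup_idempotent:
  assumes X: "Hausdorff_space X" and S: "compact_rt_subsemigroup X mul S"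
  shows "\<exists>e\<in>S. mul e e = e"
proof -
  define P where "P A \<longleftrightarrow> compact_rt_subsemigroup X mul A \<and> A \<subseteq> S" for A
  have "\<exists>A. P A \<and> A \<subseteq> S \<and> (\<forall>B. P B \<longrightarrow> B \<subseteq> A \<longrightarrow> B = A)"
  proof (rule compactin_minimal_exists[OF X])
    fix \<C> assume "\<C> \<noteq> {}" "\<forall>A\<in>\<C>. P A" "\<Inter>\<C> \<noteq> {}"
    then show "P (\<Inter>\<C>)"
      using compact_rt_subsemigroup_chain_Inter[OF X, of \<C> mul] unfolding P_def by blast
  qed (use S in \<open>auto simp: P_def compact_rt_subsemigroup_def\<close>)
  then obtain A where PA: "P A" and minimal: "\<And>B. P B \<Longrightarrow> B \<subseteq> A \<Longrightarrow> B = A" by blast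
  have A: "compact_rt_subsemigroup X mul A" and "A \<subseteq> S" using PA unfolding P_def by auto
  then have closed: "\<And>x y. x \<in> A \<Longrightarrow> y \<in> A \<Longrightarrow> mul x y \<in> A"
    and assoc: "\<And>x y z. x \<in> A \<Longrightarrow> y \<in> A \<Longrightarrow> z \<in> A \<Longrightarrow> mul (mul x y) z = mul x (mul y z)"
    and cont: "\<And>s. s \<in> A \<Longrightarrow> continuous_map X X (\<lambda>x. mul x s)"
    and "compactin X A" "A \<noteq> {}"
    unfolding compact_rt_subsemigroup_def by auto
  then obtain a where a: "a \<in> A" by blast
  have "(\<lambda>x. mul x a) ` A = A"
  proof (rule minimal)
    have "compact_rt_subsemigroup X mul ((\<lambda>x. mul x a) ` A)"
    proof (rule compact_rt_subsemigroup_subset[OF A])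
      show "compactin X ((\<lambda>x. mul x a) ` A)" by (rule image_compactin[OF \<open>compactin X A\<close> cont[OF a]])
      fix u v assume "u \<in> (\<lambda>x. mul x a) ` A" "v \<in> (\<lambda>x. mul x a) ` A"
      then obtain x y where "x \<in> A" "y \<in> A" "u = mul x a" "v = mul y a" by blast
      then have "mul u v = mul (mul u y) a" "mul u y \<in> A" using assoc closed a by auto
      then show "mul u v \<in> (\<lambda>x. mul x a) ` A" by blast
    qed (use a closed in auto)
    then show "P ((\<lambda>x. mul x a) ` A)" using \<open>A \<subseteq> S\<close> closed a unfolding P_def by blast
  qed (use closed a in blast)
  then obtain x0 where "x0 \<in> A" "mul x0 a = a" using a by (metis imageE)
  define D where "D = {x \<in> A. mul x a = a}"
  have "D = A"
  proof (rule minimal)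
    have "closedin X {x \<in> topspace X. mul x a = a}"
      using closedin_continuous_maps_eq[OF X cont[OF a], of "\<lambda>_. a"] a
        compactin_subset_topspace[OF \<open>compactin X A\<close>] by auto
    moreover have "D = {x \<in> topspace X. mul x a = a} \<inter> A"
      using compactin_subset_topspace[OF \<open>compactin X A\<close>] unfolding D_def by blast
    ultimately have "compactin X D" using closed_Int_compactin[OF _ \<open>compactin X A\<close>] by metis
    moreover have "D \<noteq> {}" using \<open>x0 \<in> A\<close> \<open>mul x0 a = a\<close> unfolding D_def by blast
    moreover have "mul u v \<in> D" if "u \<in> D" "v \<in> D" for u v
      using that assoc closed a unfolding D_def by auto
    ultimately show "P D" using \<open>A \<subseteq> S\<close> unfolding P_def
      by (intro conjI compact_rt_subsemigroup_subset[OF A]) (auto simp: D_def)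
  qed (auto simp: D_def)
  then show ?thesis using a \<open>A \<subseteq> S\<close> unfolding D_def by blast
qed

lemma compact_rt_subsemigroup_minimal_left_ideal:
  assumes X: "Hausdorff_space X" and S: "compact_rt_subsemigroup X mul S"
    and J: "J \<subseteq> S" "compactin X J" "J \<noteq> {}" "\<And>s j. s \<in> S \<Longrightarrow> j \<in> J \<Longrightarrow> mul s j \<in> J"
  shows "\<exists>L\<subseteq>J. L \<noteq> {} \<and> compactin X L \<and> (\<forall>s\<in>S. \<forall>l\<in>L. mul s l \<in> L)
            \<and> (\<forall>l\<in>L. (\<lambda>s. mul s l) ` S = L)"
proof -
  have closed: "\<And>x y. x \<in> S \<Longrightarrow> y \<in> S \<Longrightarrow> mul x y \<in> S"
    and assoc: "\<And>x y z. x \<in> S \<Longrightarrow> y \<in> S \<Longrightarrow> z \<in> S \<Longrightarrow> mul (mul x y) z = mul x (mul y z)"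
    and cont: "\<And>s. s \<in> S \<Longrightarrow> continuous_map X X (\<lambda>x. mul x s)" and "compactin X S"
    using S unfolding compact_rt_subsemigroup_def by auto
  define P where "P A \<longleftrightarrow> A \<subseteq> S \<and> compactin X A \<and> A \<noteq> {} \<and> (\<forall>s\<in>S. \<forall>y\<in>A. mul s y \<in> A)" for A
  have "\<exists>L. P L \<and> L \<subseteq> J \<and> (\<forall>B. P B \<longrightarrow> B \<subseteq> L \<longrightarrow> B = L)"
  proof (rule compactin_minimal_exists[OF X])
    fix \<C> assume \<C>: "\<C> \<noteq> {}" "\<forall>A\<in>\<C>. P A" "\<Inter>\<C> \<noteq> {}"
    then obtain K where K: "K \<in> \<C>" by blast
    have "compactin X A" if "A \<in> \<C>" for A using \<C>(2) that unfolding P_def by blast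
    then have "compactin X (\<Inter>\<C>)"
      using K compactin_imp_closedin[OF X] closed_compactin_Inter by metis
    moreover have "\<Inter>\<C> \<subseteq> S" using K \<C>(2) unfolding P_def by blast
    moreover have "mul s y \<in> \<Inter>\<C>" if "s \<in> S" "y \<in> \<Inter>\<C>" for s y
      using \<C>(2) that unfolding P_def by blast
    ultimately show "P (\<Inter>\<C>)" using \<C>(3) unfolding P_def by blast
  next
    show "P J" using J unfolding P_def by blast
  next
    show "compactin X A \<and> A \<noteq> {}" if "P A" for A using that unfolding P_def by blast
  qed
  then obtain L where PL: "P L" and "L \<subseteq> J" and minimal: "\<And>B. P B \<Longrightarrow> B \<subseteq> L \<Longrightarrow> B = L" by blast
  have "(\<lambda>s. mul s l) ` S = L" if l: "l \<in> L" for l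
  proof (rule minimal)
    have "l \<in> S" using l PL unfolding P_def by blast
    have "mul s y \<in> (\<lambda>s. mul s l) ` S" if "s \<in> S" and y: "y \<in> (\<lambda>s. mul s l) ` S" for s y
    proof -
      obtain t where t: "t \<in> S" "y = mul t l" using y by blast
      then have "mul s y = mul (mul s t) l" using assoc \<open>s \<in> S\<close> \<open>l \<in> S\<close> by simp
      then show ?thesis using closed t \<open>s \<in> S\<close> by blast
    qed
    moreover have "compactin X ((\<lambda>s. mul s l) ` S)"
      using image_compactin[OF \<open>compactin X S\<close> cont[OF \<open>l \<in> S\<close>]] .
    moreover have "(\<lambda>s. mul s l) ` S \<subseteq> S" "(\<lambda>s. mul s l) ` S \<noteq> {}"
      using closed \<open>l \<in> S\<close> by auto
    ultimately show "P ((\<lambda>s. mul s l) ` S)" unfolding P_def by blast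
    show "(\<lambda>s. mul s l) ` S \<subseteq> L" using PL l unfolding P_def by auto
  qed
  moreover have "L \<noteq> {}" "compactin X L" "\<forall>s\<in>S. \<forall>l\<in>L. mul s l \<in> L"
    using PL unfolding P_def by auto
  ultimately show ?thesis using \<open>L \<subseteq> J\<close> by blast
qed

lemma closedin_Collect_Ball:
  assumes "\<And>i. i \<in> I \<Longrightarrow> closedin X {x \<in> topspace X. P i x}"
  shows "closedin X {x \<in> topspace X. \<forall>i\<in>I. P i x}"
proof (cases "I = {}")
  case False
  have "{x \<in> topspace X. \<forall>i\<in>I. P i x} = (\<Inter>i\<in>I. {x \<in> topspace X. P i x})"
    using False by auto
  then show ?thesis using False assms by (simp add: closedin_INT)
qed simp

lemma closedin_Collect_conj:
  "closedin X {x \<in> topspace X. P x} \<Longrightarrow> closedin X {x \<in> topspace X. Q x} \<Longrightarrow>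
   closedin X {x \<in> topspace X. P x \<and> Q x}"
proof -
  assume "closedin X {x \<in> topspace X. P x}" "closedin X {x \<in> topspace X. Q x}"
  moreover have "{x \<in> topspace X. P x \<and> Q x} = {x \<in> topspace X. P x} \<inter> {x \<in> topspace X. Q x}"
    by blast
  ultimately show ?thesis by (simp add: closedin_Int)
qed

lemma closedin_Collect_imp:
  "closedin X {x \<in> topspace X. Q x} \<Longrightarrow> closedin X {x \<in> topspace X. b \<longrightarrow> Q x}"
  by (cases b) simp_all

section \<open>Chains of principal right ideals\<close>

lemma X_act_range: "X_act c (range ((*) a)) = range ((*) (c * a :: 'm::monoid_mult))"
  unfolding X_act_def by (auto simp: image_image mult.assoc)

lemma Y_act_conv: "Y_act a x = X_act a ` x"
  unfolding Y_act_def by auto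

lemma UNIV_in_XX: "(UNIV :: 'm::monoid_mult set) \<in> XX"
  unfolding XX_def by (metis (mono_tags, lifting) mem_Collect_eq mult_1 surj_def)

lemma finite_XX: "finite (XX :: 'm::{monoid_mult,finite} set set)"
proof -
  have "XX = range (\<lambda>a::'m. range ((*) a))" unfolding XX_def by auto
  then show ?thesis by simp
qed

lemma YYD:
  assumes "y \<in> YY"
  shows "y \<noteq> {}" and "y \<subseteq> XX" and "\<And>i j. i \<in> y \<Longrightarrow> j \<in> y \<Longrightarrow> i \<subseteq> j \<or> j \<subseteq> i"
  using assms unfolding YY_def by blast+

lemma finite_YY: "(y :: 'm::{monoid_mult,finite} set set) \<in> YY \<Longrightarrow> finite y"
  using YYD(2) finite_XX finite_subset by blast

lemma card_YY_le_card_XX: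
  "(y :: 'm::{monoid_mult,finite} set set) \<in> YY \<Longrightarrow> card y \<le> card (XX :: 'm set set)"
  by (rule card_mono[OF finite_XX YYD(2)])

definition Y_top :: "'m::monoid_mult set set \<Rightarrow> 'm set" where
  "Y_top y = (THE i. i \<in> y \<and> (\<forall>j\<in>y. j \<subseteq> i))"

definition Y_pred :: "'m::monoid_mult set set \<Rightarrow> 'm set set" where
  "Y_pred y = y - {Y_top y}"

lemma Y_top_eqI: "i \<in> y \<Longrightarrow> (\<And>j. j \<in> y \<Longrightarrow> j \<subseteq> i) \<Longrightarrow> Y_top y = i"
  unfolding Y_top_def by (rule the_equality) blast+

lemma Y_top:
  assumes y: "(y :: 'm::{monoid_mult,finite} set set) \<in> YY"
  shows "Y_top y \<in> y" and "\<And>j. j \<in> y \<Longrightarrow> j \<subseteq> Y_top y"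
proof -
  obtain i where "i \<in> y" and maximal: "\<And>j. j \<in> y \<Longrightarrow> i \<subseteq> j \<Longrightarrow> i = j"
    using finite_has_maximal[OF finite_YY[OF y] YYD(1)[OF y]] by blast
  then have "j \<subseteq> i" if "j \<in> y" for j using YYD(3)[OF y that \<open>i \<in> y\<close>] that by blast
  with \<open>i \<in> y\<close> have "Y_top y = i" by (intro Y_top_eqI)
  with \<open>i \<in> y\<close> \<open>\<And>j. j \<in> y \<Longrightarrow> j \<subseteq> i\<close>
  show "Y_top y \<in> y" and "\<And>j. j \<in> y \<Longrightarrow> j \<subseteq> Y_top y" by simp_all
qed

lemma Y_top_XX: "(y :: 'm::{monoid_mult,finite} set set) \<in> YY \<Longrightarrow> Y_top y \<in> XX"
  using Y_top(1) YYD(2) by blast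

lemma Y_top_UNIV: "(y :: 'm::{monoid_mult,finite} set set) \<in> YY \<Longrightarrow> UNIV \<in> y \<Longrightarrow> Y_top y = UNIV"
  by (rule Y_top_eqI) auto

lemma card_YY_pos: "(y :: 'm::{monoid_mult,finite} set set) \<in> YY \<Longrightarrow> 0 < card y"
  using finite_YY YYD(1) by (simp add: card_gt_0_iff)

lemma card_Y_pred: "(y :: 'm::{monoid_mult,finite} set set) \<in> YY \<Longrightarrow> card (Y_pred y) = card y - 1"
  unfolding Y_pred_def by (simp add: card_Diff_singleton Y_top(1) finite_YY)

lemma Y_pred_YY:
  assumes "(y :: 'm::{monoid_mult,finite} set set) \<in> YY" and "2 \<le> card y"
  shows "Y_pred y \<in> YY"
proof -
  have "Y_pred y \<noteq> {}" using card_Y_pred[OF assms(1)] assms(2) by auto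
  then show ?thesis using assms(1) unfolding YY_def Y_pred_def by blast
qed

text \<open>Induction along the unique maximal chain below y in \<open>\<le>\<^sub>Y\<close>, obtained by removing
  the top element repeatedly.\<close>
lemma YY_induct [consumes 1, case_names single pred]:
  assumes "(y :: 'm::{monoid_mult,finite} set set) \<in> YY"
    and single: "\<And>y. y \<in> YY \<Longrightarrow> card y = 1 \<Longrightarrow> P y"
    and pred: "\<And>y. y \<in> YY \<Longrightarrow> 2 \<le> card y \<Longrightarrow> P (Y_pred y) \<Longrightarrow> P y"
  shows "P y"
  using assms(1)
proof (induction "card y" arbitrary: y rule: less_induct)
  case less
  show ?case
  proof (cases "2 \<le> card y")
    case True
    then show ?thesis
      using less Y_pred_YY card_Y_pred pred by (metis diff_less less_numeral_extra(1) card_YY_pos)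
  next
    case False
    then show ?thesis using single[OF less.prems] card_YY_pos[OF less.prems] by simp
  qed
qed

lemma Y_act_YY:
  assumes y: "y \<in> YY"
  shows "Y_act c y \<in> YY"
proof -
  have "X_act c i \<in> XX" if i: "i \<in> y" for i
  proof -
    obtain a where "i = range ((*) a)" using YYD(2)[OF y] i unfolding XX_def by blast
    then show ?thesis using X_act_range unfolding XX_def by blast
  qed
  moreover have "X_act c i \<subseteq> X_act c j \<or> X_act c j \<subseteq> X_act c i" if "i \<in> y" "j \<in> y" for i j
    using YYD(3)[OF y that] unfolding X_act_def by (metis image_mono)
  ultimately show ?thesis using YYD(1)[OF y] unfolding YY_def Y_act_conv by blast
qed

lemma Y_top_Y_act:
  assumes y: "(y :: 'm::{monoid_mult,finite} set set) \<in> YY"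
  shows "Y_top (Y_act c y) = X_act c (Y_top y)"
proof (rule Y_top_eqI)
  show "X_act c (Y_top y) \<in> Y_act c y" unfolding Y_act_conv using Y_top(1)[OF y] by blast
  fix j assume "j \<in> Y_act c y"
  then obtain i where "i \<in> y" "j = X_act c i" unfolding Y_act_conv by blast
  then show "j \<subseteq> X_act c (Y_top y)" using Y_top(2)[OF y] unfolding X_act_def by blast
qed

lemma card_Y_act_le: "(y :: 'm::{monoid_mult,finite} set set) \<in> YY \<Longrightarrow> card (Y_act a y) \<le> card y"
  unfolding Y_act_conv using card_image_le finite_YY by blast

lemma Y_act_Y_pred:
  assumes y: "(y :: 'm::{monoid_mult,finite} set set) \<in> YY" and "2 \<le> card y"
  shows "Y_act a (Y_pred y) = Y_act a y \<or>
         (2 \<le> card (Y_act a y) \<and> Y_act a (Y_pred y) = Y_pred (Y_act a y))"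
proof -
  have "y = insert (Y_top y) (Y_pred y)" unfolding Y_pred_def using Y_top(1)[OF y] by blast
  then have insert: "Y_act a y = insert (X_act a (Y_top y)) (Y_act a (Y_pred y))"
    unfolding Y_act_conv by (metis image_insert)
  show ?thesis
  proof (cases "X_act a (Y_top y) \<in> Y_act a (Y_pred y)")
    case True
    then show ?thesis using insert by (simp add: insert_absorb)
  next
    case False
    have pred: "Y_act a (Y_pred y) \<in> YY" using Y_act_YY Y_pred_YY[OF assms] by blast
    have "Y_pred (Y_act a y) = Y_act a y - {X_act a (Y_top y)}"
      by (simp add: Y_pred_def Y_top_Y_act[OF y])
    then have "Y_pred (Y_act a y) = Y_act a (Y_pred y)" using insert False by simp
    moreover have "card (Y_act a y) = Suc (card (Y_act a (Y_pred y)))"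
      using insert False finite_YY[OF pred] by simp
    ultimately show ?thesis using card_YY_pos[OF pred] by simp
  qed
qed

lemma Y_le_trans:
  assumes "Y_le x y" and "Y_le y z"
  shows "Y_le x z"
  unfolding Y_le_def
proof (intro conjI ballI)
  show "x \<subseteq> z" using assms unfolding Y_le_def by blast
  have xy: "x \<subseteq> y" "\<And>i j. i \<in> x \<Longrightarrow> j \<in> y - x \<Longrightarrow> i \<subset> j"
    and yz: "\<And>i j. i \<in> y \<Longrightarrow> j \<in> z - y \<Longrightarrow> i \<subset> j"
    using assms unfolding Y_le_def by auto
  fix i j assume "i \<in> x" and "j \<in> z - x"
  show "i \<subset> j"
  proof (cases "j \<in> y")
    case True
    then show ?thesis using xy(2) \<open>i \<in> x\<close> \<open>j \<in> z - x\<close> by blast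
  next
    case False
    then show ?thesis using yz xy(1) \<open>i \<in> x\<close> \<open>j \<in> z - x\<close> by blast
  qed
qed

lemma Y_le_Y_pred:
  assumes "(y :: 'm::{monoid_mult,finite} set set) \<in> YY"
  shows "Y_le (Y_pred y) y"
  unfolding Y_le_def Y_pred_def using Y_top(2)[OF assms] by blast

lemma Y_le_imp_Y_le_Y_pred:
  assumes x: "(x :: 'm::{monoid_mult,finite} set set) \<in> YY" and y: "y \<in> YY"
    and "Y_le x y" and "x \<noteq> y"
  shows "2 \<le> card y" and "Y_le x (Y_pred y)"
proof -
  have "x \<subseteq> y" and strict: "\<And>i j. i \<in> x \<Longrightarrow> j \<in> y - x \<Longrightarrow> i \<subset> j"
    using \<open>Y_le x y\<close> unfolding Y_le_def by auto
  obtain j where j: "j \<in> y" "j \<notin> x" using \<open>x \<subseteq> y\<close> \<open>x \<noteq> y\<close> by blast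
  have "Y_top y \<notin> x" using strict[of "Y_top y" j] j Y_top(2)[OF y j(1)] by blast
  then have "x \<subseteq> Y_pred y" unfolding Y_pred_def using \<open>x \<subseteq> y\<close> by blast
  then have "Y_pred y \<noteq> {}" using YYD(1)[OF x] by blast
  then show "2 \<le> card y" using card_Y_pred[OF y] card_YY_pos[OF y] by (auto simp: Y_pred_def)
  show "Y_le x (Y_pred y)" unfolding Y_le_def using \<open>x \<subseteq> Y_pred y\<close> strict unfolding Y_pred_def by blast
qed

lemma Y_maximal_UNIV:
  assumes "Y_maximal (y :: 'm::{monoid_mult,finite} set set)"
  shows "UNIV \<in> y"
proof (rule ccontr)
  assume "UNIV \<notin> y"
  have y: "y \<in> YY" using assms unfolding Y_maximal_def by blast
  have "insert UNIV y \<in> YY"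
    using YYD[OF y] UNIV_in_XX unfolding YY_def by auto
  moreover have "Y_le y (insert UNIV y)"
    using \<open>UNIV \<notin> y\<close> unfolding Y_le_def by blast
  ultimately have "insert UNIV y = y" using assms unfolding Y_maximal_def by blast
  then show False using \<open>UNIV \<notin> y\<close> by blast
qed

lemma Y_le_imp_Y_top_subset:
  assumes "(x :: 'm::{monoid_mult,finite} set set) \<in> YY" and "y \<in> YY" and "Y_le x y"
  shows "Y_top x \<subseteq> Y_top y"
  using Y_top(1)[OF assms(1)] Y_top(2)[OF assms(2)] assms(3) unfolding Y_le_def by blast

function chain_prod :: "('u \<Rightarrow> 'u \<Rightarrow> 'u) \<Rightarrow> ('m::{monoid_mult,finite} set set \<Rightarrow> 'u) \<Rightarrow> 'm set set \<Rightarrow> 'u"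
  where "chain_prod m h y = (if y \<in> YY \<and> 2 \<le> card y then m (h y) (chain_prod m h (Y_pred y)) else h y)"
  by auto
termination by (relation "Wellfounded.measure (\<lambda>(_, _, y). card y)") (auto simp: card_Y_pred)

declare chain_prod.simps [simp del]

lemma chain_prod_single: "\<not> 2 \<le> card y \<Longrightarrow> chain_prod m h y = h y"
  by (simp add: chain_prod.simps)

lemma chain_prod_pred: "y \<in> YY \<Longrightarrow> 2 \<le> card y \<Longrightarrow> chain_prod m h y = m (h y) (chain_prod m h (Y_pred y))"
  by (simp add: chain_prod.simps)

context
  fixes U :: "'u set" and m :: "'u \<Rightarrow> 'u \<Rightarrow> 'u" and h :: "'m::{monoid_mult,finite} set set \<Rightarrow> 'u"
  assumes closed: "\<And>u v. u \<in> U \<Longrightarrow> v \<in> U \<Longrightarrow> m u v \<in> U"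
    and assoc: "\<And>u v w. u \<in> U \<Longrightarrow> v \<in> U \<Longrightarrow> w \<in> U \<Longrightarrow> m (m u v) w = m u (m v w)"
    and h: "\<And>y. y \<in> YY \<Longrightarrow> h y \<in> U" "\<And>y. y \<in> YY \<Longrightarrow> m (h y) (h y) = h y"
begin

lemma chain_prod_in: "y \<in> YY \<Longrightarrow> chain_prod m h y \<in> U"
  by (induction rule: YY_induct) (simp_all add: chain_prod_single chain_prod_pred Y_pred_YY closed h)

lemma chain_prod_absorb: "y \<in> YY \<Longrightarrow> m (h y) (chain_prod m h y) = chain_prod m h y"
proof (cases "2 \<le> card y")
  case True
  assume y: "y \<in> YY"
  then show ?thesis
    using assoc[OF h(1)[OF y] h(1)[OF y] chain_prod_in[OF Y_pred_YY[OF y True]]] h(2)[OF y]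
    by (simp add: chain_prod_pred[OF y True])
qed (simp add: chain_prod_single h)

lemma chain_prod_equivariant:
  fixes act :: "'m \<Rightarrow> 'u \<Rightarrow> 'u"
  assumes hom: "\<And>u v. u \<in> U \<Longrightarrow> v \<in> U \<Longrightarrow> act c (m u v) = m (act c u) (act c v)"
    and equivariant: "\<And>y. y \<in> YY \<Longrightarrow> h (Y_act c y) = act c (h y)"
    and "y \<in> YY"
  shows "chain_prod m h (Y_act c y) = act c (chain_prod m h y)"
  using \<open>y \<in> YY\<close>
proof (induction rule: YY_induct)
  case (single y)
  then have "\<not> 2 \<le> card (Y_act c y)" using card_Y_act_le[OF single(1), of c] by simp
  then show ?case using single by (simp add: chain_prod_single equivariant)
next
  case (pred y)
  have cy: "Y_act c y \<in> YY" using Y_act_YY[OF pred(1)] .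
  have "act c (chain_prod m h y) = m (h (Y_act c y)) (chain_prod m h (Y_act c (Y_pred y)))"
    using pred Y_pred_YY[OF pred(1,2)] by (simp add: chain_prod_pred hom h chain_prod_in equivariant)
  also have "\<dots> = chain_prod m h (Y_act c y)"
    using Y_act_Y_pred[OF pred(1,2), of c] chain_prod_absorb[OF cy] chain_prod_pred[OF cy, of m h]
    by (metis (no_types))
  finally show ?case by simp
qed

end

section \<open>Almost R-trivial monoids\<close>

definition right_zero :: "'m::monoid_mult \<Rightarrow> bool" where
  "right_zero z \<longleftrightarrow> (\<forall>a. a * z = z)"

lemma R_equiv_imp_right_zero:
  assumes "almost_R_trivial TYPE('m::monoid_mult)" and "range ((*) a) = range ((*) (b :: 'm))"
    and "a \<noteq> b"
  shows "right_zero b"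
  using assms unfolding almost_R_trivial_def R_equiv_def right_zero_def by blast

definition X_rep :: "'m::monoid_mult set \<Rightarrow> 'm" where
  "X_rep i = (SOME a. range ((*) a) = i)"

lemma range_X_rep: "i \<in> XX \<Longrightarrow> range ((*) (X_rep i)) = i"
  unfolding X_rep_def XX_def by (rule someI_ex) blast

lemma finite_monoid_inverse_commute:
  assumes "x * y = (1 :: 'm::{monoid_mult,finite})"
  shows "y * x = 1"
proof -
  have "inj ((*) y)"
    by (rule injI) (metis assms mult.assoc mult_1)
  then have "surj ((*) y)" by (simp add: finite_UNIV_inj_surj)
  then obtain t where t: "y * t = 1" by (metis surjD)
  have "x = x * (y * t)" using t by simp
  also have "\<dots> = t" using assms by (simp add: mult.assoc[symmetric])
  finally show ?thesis using t by simp
qed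

text \<open>With at most two principal right ideals, any proper one mM is a minimal one, so for each a
  either amM = mM (then am = m, or m is a right zero by almost R-triviality) or amM = M,
  which makes m right invertible, contradicting mM \<noteq> M.\<close>
lemma right_zero_if_card_XX_le_2:
  assumes "card (XX :: 'm::{monoid_mult,finite} set set) \<le> 2" and "almost_R_trivial TYPE('m)"
    and m: "range ((*) m) \<noteq> (UNIV :: 'm set)"
  shows "right_zero m"
  unfolding right_zero_def
proof
  fix a :: 'm
  have "range ((*) (a * m)) \<in> XX" "range ((*) m) \<in> XX" unfolding XX_def by blast+
  then have "{range ((*) (a * m)), range ((*) m), UNIV} \<subseteq> XX" using UNIV_in_XX by blast
  then have "card {range ((*) (a * m)), range ((*) m), UNIV} \<le> 2"
    using card_mono[OF finite_XX] assms(1) by (meson le_trans)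
  then have "range ((*) (a * m)) = UNIV \<or> range ((*) (a * m)) = range ((*) m)"
    using m by (auto simp: card_insert_if split: if_splits)
  then show "a * m = m"
  proof
    assume "range ((*) (a * m)) = UNIV"
    then obtain n where "a * (m * n) = 1" by (metis UNIV_I imageE mult.assoc)
    then have "m * (n * a) = 1" using finite_monoid_inverse_commute by (metis mult.assoc)
    then have "t = m * (n * a * t)" for t by (metis mult.assoc mult_1)
    then have "range ((*) m) = UNIV" by blast
    with m show ?thesis by blast
  next
    assume "range ((*) (a * m)) = range ((*) m)"
    then show "a * m = m"
      using R_equiv_imp_right_zero[OF assms(2)] unfolding right_zero_def by blast
  qed
qed

section \<open>Monoid actions on a compact semigroup\<close>

locale compact_semigroup_action =
  fixes T :: "'u topology" and mul :: "'u \<Rightarrow> 'u \<Rightarrow> 'u"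
    and act :: "'m::{monoid_mult, finite} \<Rightarrow> 'u \<Rightarrow> 'u"
  assumes semigroup: "compact_right_topological_semigroup T mul"
    and almost_R_trivial: "almost_R_trivial TYPE('m)"
    and action: "acts_by_continuous_endomorphisms T mul act"
begin

abbreviation "U \<equiv> topspace T"

lemma mul_closed: "x \<in> U \<Longrightarrow> y \<in> U \<Longrightarrow> mul x y \<in> U"
  and mul_assoc: "x \<in> U \<Longrightarrow> y \<in> U \<Longrightarrow> z \<in> U \<Longrightarrow> mul (mul x y) z = mul x (mul y z)"
  and U_nonempty: "U \<noteq> {}"
  and compact: "compact_space T"
  and Hausdorff: "Hausdorff_space T"
  and continuous_mul_right: "u \<in> U \<Longrightarrow> continuous_map T T (\<lambda>x. mul x u)"
  using semigroup unfolding compact_right_topological_semigroup_def semigroup_on_def by blast+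

lemma compact_rt_subsemigroup_U: "compact_rt_subsemigroup T mul U"
  using compact mul_closed mul_assoc U_nonempty continuous_mul_right
  unfolding compact_rt_subsemigroup_def compact_space_def by blast

lemma act_one: "u \<in> U \<Longrightarrow> act 1 u = u"
  and act_mult: "u \<in> U \<Longrightarrow> act (a * b) u = act a (act b u)"
  and continuous_act: "continuous_map T T (act a)"
  and act_mul: "u \<in> U \<Longrightarrow> v \<in> U \<Longrightarrow> act a (mul u v) = mul (act a u) (act a v)"
  using action unfolding acts_by_continuous_endomorphisms_def by blast+

lemma act_in_U: "u \<in> U \<Longrightarrow> act a u \<in> U"
  using continuous_act continuous_map_image_subset_topspace by blast

lemma act_idempotent: "u \<in> U \<Longrightarrow> mul u u = u \<Longrightarrow> mul (act a u) (act a u) = act a u"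
  using act_mul by metis

lemma act_idem_le: "u \<in> U \<Longrightarrow> v \<in> U \<Longrightarrow> idem_le mul u v \<Longrightarrow> idem_le mul (act a u) (act a v)"
  unfolding idem_le_def using act_mul by metis

lemma idem_le_trans:
  assumes "u \<in> U" "v \<in> U" "w \<in> U" and "idem_le mul u v" "idem_le mul v w"
  shows "idem_le mul u w"
  using assms mul_assoc unfolding idem_le_def by metis

text \<open>If z0 is a right zero, then z0(U) is a compact subsemigroup fixed pointwise by every right
  zero z (as z z0 = z0), and it contains z(e) = z0(z(e)) for each e. An idempotent p of a minimal
  left ideal L of z0(U) has the stated properties: z(e) p = z(e) puts z(e) into L, so
  p \<in> z0(U) z(e) and p z(e) = p when e is idempotent.\<close>
lemma idempotent_fixed_by_right_zeros:
  obtains p where "p \<in> U" "mul p p = p" "\<And>z. right_zero z \<Longrightarrow> act z p = p"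
    and "\<And>z e. right_zero z \<Longrightarrow> e \<in> U \<Longrightarrow> mul e e = e \<Longrightarrow> mul e p = e \<Longrightarrow> mul p (act z e) = p"
proof (cases "\<exists>z0::'m. right_zero z0")
  case False
  obtain p where "p \<in> U" "mul p p = p"
    using compact_rt_subsemigroup_idempotent[OF Hausdorff compact_rt_subsemigroup_U] by blast
  with False that show ?thesis by blast
next
  case True
  then obtain z0 :: 'm where z0: "right_zero z0" by blast
  define F where "F = act z0 ` U"
  have "F \<subseteq> U" unfolding F_def using act_in_U by blast
  have F_closed: "mul x y \<in> F" if "x \<in> F" "y \<in> F" for x y
  proof -
    obtain u v where "u \<in> U" "v \<in> U" "x = act z0 u" "y = act z0 v"
      using \<open>x \<in> F\<close> \<open>y \<in> F\<close> unfolding F_def by blast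
    then have "mul x y = act z0 (mul u v)" "mul u v \<in> U" using act_mul mul_closed by auto
    then show ?thesis unfolding F_def by blast
  qed
  have F: "compact_rt_subsemigroup T mul F"
  proof (rule compact_rt_subsemigroup_subset[OF compact_rt_subsemigroup_U \<open>F \<subseteq> U\<close> _ _ F_closed])
    show "compactin T F" unfolding F_def
      using image_compactin[OF _ continuous_act] compact unfolding compact_space_def by blast
    show "F \<noteq> {}" unfolding F_def using U_nonempty by blast
  qed
  then obtain L where "L \<subseteq> F" "L \<noteq> {}" "compactin T L" and L_ideal: "\<forall>s\<in>F. \<forall>l\<in>L. mul s l \<in> L"
    and L_minimal: "\<forall>l\<in>L. (\<lambda>s. mul s l) ` F = L"
    using compact_rt_subsemigroup_minimal_left_ideal[OF Hausdorff F order_refl _ _ F_closed]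
    unfolding compact_rt_subsemigroup_def by blast
  then have "compact_rt_subsemigroup T mul L"
    by (intro compact_rt_subsemigroup_subset[OF F]) (auto simp: subset_iff)
  then obtain p where "p \<in> L" "mul p p = p"
    using compact_rt_subsemigroup_idempotent[OF Hausdorff] by blast
  then obtain u where u: "u \<in> U" "p = act z0 u" using \<open>L \<subseteq> F\<close> unfolding F_def by blast
  have "p \<in> U" using \<open>p \<in> L\<close> \<open>L \<subseteq> F\<close> \<open>F \<subseteq> U\<close> by blast
  have fixed: "act z p = p" if "right_zero z" for z
  proof -
    have "act z p = act (z * z0) u" using u act_mult by simp
    with z0 u show ?thesis unfolding right_zero_def by simp
  qed
  have "mul p (act z e) = p"
    if z: "right_zero z" and e: "e \<in> U" "mul e e = e" "mul e p = e" for z e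
  proof -
    have "act z e = act z0 (act z e)" using z z0 act_mult e(1) unfolding right_zero_def by metis
    then have "act z e \<in> F" unfolding F_def using act_in_U e(1) by blast
    moreover have "mul (act z e) p = act z e"
      using act_mul[OF e(1) \<open>p \<in> U\<close>, of z] fixed[OF z] e(3) by simp
    ultimately have "act z e \<in> L" using L_ideal \<open>p \<in> L\<close> by metis
    then obtain s where "s \<in> F" "p = mul s (act z e)" using L_minimal \<open>p \<in> L\<close> by blast
    then show ?thesis
      using mul_assoc \<open>F \<subseteq> U\<close> act_in_U e act_idempotent \<open>act z e \<in> F\<close> by (metis subsetD)
  qed
  with \<open>p \<in> U\<close> \<open>mul p p = p\<close> fixed that show ?thesis by blast
qed

text \<open>Take p as above, an idempotent e in a minimal left ideal inside Up, and e0 = pe. Then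
  z(e0) = z(p) z(e) = p for each right zero z, and e0 \<le> p.\<close>
lemma minimal_idempotent:
  obtains e0 where "e0 \<in> U" "mul e0 e0 = e0" "\<And>J. two_sided_ideal U mul J \<Longrightarrow> e0 \<in> J"
    and "\<And>f. f \<in> U \<Longrightarrow> mul f f = f \<Longrightarrow> idem_le mul f e0 \<Longrightarrow> f = e0"
    and "\<And>z z'. right_zero z \<Longrightarrow> right_zero z' \<Longrightarrow> act z e0 = act z' e0"
    and "\<And>z. right_zero z \<Longrightarrow> idem_le mul e0 (act z e0)"
proof -
  obtain p where p: "p \<in> U" "mul p p = p" and fixed: "\<And>z. right_zero z \<Longrightarrow> act z p = p"
    and absorb: "\<And>z e. right_zero z \<Longrightarrow> e \<in> U \<Longrightarrow> mul e e = e \<Longrightarrow> mul e p = e \<Longrightarrow> mul p (act z e) = p"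
    using idempotent_fixed_by_right_zeros by blast
  define J where "J = (\<lambda>x. mul x p) ` U"
  have "J \<subseteq> U" unfolding J_def using mul_closed p by blast
  have "compactin T J"
    unfolding J_def using image_compactin[OF _ continuous_mul_right[OF p(1)]] compact
    unfolding compact_space_def by blast
  have J_ideal: "mul s j \<in> J" if "s \<in> U" "j \<in> J" for s j
  proof -
    obtain x where "x \<in> U" "j = mul x p" using \<open>j \<in> J\<close> unfolding J_def by blast
    then have "mul s j = mul (mul s x) p" "mul s x \<in> U" using mul_assoc mul_closed p \<open>s \<in> U\<close> by auto
    then show ?thesis unfolding J_def by blast
  qed
  obtain L where "L \<subseteq> J" "L \<noteq> {}" "compactin T L" and L_ideal: "\<forall>s\<in>U. \<forall>l\<in>L. mul s l \<in> L"
    and L_minimal: "\<forall>l\<in>L. (\<lambda>s. mul s l) ` U = L"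
    using compact_rt_subsemigroup_minimal_left_ideal[OF Hausdorff compact_rt_subsemigroup_U
        \<open>J \<subseteq> U\<close> \<open>compactin T J\<close> _ J_ideal] U_nonempty unfolding J_def by blast
  have "L \<subseteq> U" using \<open>L \<subseteq> J\<close> \<open>J \<subseteq> U\<close> by blast
  then have "compact_rt_subsemigroup T mul L"
    using L_ideal \<open>L \<noteq> {}\<close> \<open>compactin T L\<close>
    by (intro compact_rt_subsemigroup_subset[OF compact_rt_subsemigroup_U]) auto
  then obtain e where "e \<in> L" "mul e e = e"
    using compact_rt_subsemigroup_idempotent[OF Hausdorff] by blast
  have "e \<in> U" using \<open>e \<in> L\<close> \<open>L \<subseteq> U\<close> by blast
  have "mul e p = e"
  proof -
    obtain w where "w \<in> U" "e = mul w p" using \<open>e \<in> L\<close> \<open>L \<subseteq> J\<close> unfolding J_def by blast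
    then show ?thesis using mul_assoc p by metis
  qed
  define e0 where "e0 = mul p e"
  have "e0 \<in> U" "e0 \<in> L" unfolding e0_def using mul_closed L_ideal p \<open>e \<in> U\<close> \<open>e \<in> L\<close> by auto
  have "mul e0 e0 = e0"
    unfolding e0_def using mul_assoc mul_closed p \<open>e \<in> U\<close> \<open>mul e p = e\<close> \<open>mul e e = e\<close> by metis
  have "e0 \<in> I" if I: "two_sided_ideal U mul I" for I
  proof -
    obtain i where "i \<in> I" "i \<in> U" using I unfolding two_sided_ideal_def by blast
    then have "mul i e0 \<in> I \<inter> L" using I L_ideal \<open>e0 \<in> U\<close> \<open>e0 \<in> L\<close> unfolding two_sided_ideal_def by blast
    then obtain s where "s \<in> U" "e0 = mul s (mul i e0)" using L_minimal \<open>e0 \<in> L\<close> by blast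
    moreover have "mul i e0 \<in> I" using \<open>mul i e0 \<in> I \<inter> L\<close> by blast
    ultimately show ?thesis using I unfolding two_sided_ideal_def by metis
  qed
  moreover have "f = e0" if f: "f \<in> U" "mul f f = f" "idem_le mul f e0" for f
  proof -
    have "mul f e0 = f" "mul e0 f = f" using f(3) unfolding idem_le_def by auto
    then have "f \<in> L" using L_ideal f(1) \<open>e0 \<in> L\<close> by metis
    then obtain s where "s \<in> U" "e0 = mul s f" using L_minimal \<open>e0 \<in> L\<close> by blast
    then have "mul e0 f = e0" using mul_assoc f by metis
    with \<open>mul e0 f = f\<close> show ?thesis by simp
  qed
  moreover have "act z e0 = p" if "right_zero z" for z
    unfolding e0_def using act_mul[OF p(1) \<open>e \<in> U\<close>] fixed absorb that \<open>e \<in> U\<close> \<open>mul e e = e\<close> \<open>mul e p = e\<close>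
    by simp
  moreover have "idem_le mul e0 p"
    unfolding idem_le_def e0_def using mul_assoc p \<open>e \<in> U\<close> \<open>mul e p = e\<close> by metis
  ultimately show ?thesis using that \<open>e0 \<in> U\<close> \<open>mul e0 e0 = e0\<close> by metis
qed

abbreviation "IU \<equiv> smallest_compact_ideal T mul"

lemma smallest_compact_ideal: "two_sided_ideal U mul IU" "closedin T IU"
proof -
  define I0 where "I0 = \<Inter>{J. two_sided_ideal U mul J \<and> compactin T J}"
  obtain e0 where "\<And>J. two_sided_ideal U mul J \<Longrightarrow> e0 \<in> J" using minimal_idempotent by metis
  then have "e0 \<in> I0" unfolding I0_def by blast
  have U_ideal: "two_sided_ideal U mul U"
    unfolding two_sided_ideal_def using U_nonempty mul_closed by blast
  moreover have "compactin T U" using compact unfolding compact_space_def .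
  ultimately have "I0 \<subseteq> U" unfolding I0_def by blast
  have I0_ideal: "two_sided_ideal U mul I0"
    using \<open>e0 \<in> I0\<close> \<open>I0 \<subseteq> U\<close> unfolding I0_def two_sided_ideal_def by blast
  have "closedin T I0"
    unfolding I0_def using U_ideal \<open>compactin T U\<close> compactin_imp_closedin[OF Hausdorff]
    by (intro closedin_Inter) blast+
  then have "compactin T I0" using closedin_compact_space[OF compact] by blast
  have "IU = I0"
    unfolding smallest_compact_ideal_def
  proof (rule the_equality)
    fix I assume "two_sided_ideal U mul I \<and> compactin T I \<and>
        (\<forall>J. two_sided_ideal U mul J \<and> compactin T J \<longrightarrow> I \<subseteq> J)"
    then show "I = I0" using I0_ideal \<open>compactin T I0\<close> unfolding I0_def by blast
  qed (use I0_ideal \<open>compactin T I0\<close> in \<open>auto simp: I0_def\<close>)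
  with I0_ideal \<open>closedin T I0\<close> show "two_sided_ideal U mul IU" "closedin T IU" by simp_all
qed

lemma IU_mul_left: "u \<in> U \<Longrightarrow> i \<in> IU \<Longrightarrow> mul u i \<in> IU"
  and IU_mul_right: "u \<in> U \<Longrightarrow> i \<in> IU \<Longrightarrow> mul i u \<in> IU"
  using smallest_compact_ideal(1) unfolding two_sided_ideal_def by blast+

definition prod_top :: "('m set set \<Rightarrow> 'u) topology" where
  "prod_top = product_topology (\<lambda>_. T) YY"

definition pmul :: "('m set set \<Rightarrow> 'u) \<Rightarrow> ('m set set \<Rightarrow> 'u) \<Rightarrow> ('m set set \<Rightarrow> 'u)" where
  "pmul f g = (\<lambda>y\<in>YY. mul (f y) (g y))"

lemma topspace_prod_top: "topspace prod_top = (\<Pi>\<^sub>E y\<in>YY. U)"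
  unfolding prod_top_def by simp

lemma Hausdorff_prod_top: "Hausdorff_space prod_top"
  unfolding prod_top_def Hausdorff_space_product_topology using Hausdorff by blast

lemma continuous_map_prod_top_eval: "y \<in> YY \<Longrightarrow> continuous_map prod_top T (\<lambda>f. f y)"
  unfolding prod_top_def by (rule continuous_map_product_projection)

lemma compact_rt_subsemigroup_prod_top: "compact_rt_subsemigroup prod_top pmul (topspace prod_top)"
  unfolding compact_rt_subsemigroup_def
proof (intro conjI ballI)
  show "compactin prod_top (topspace prod_top)"
    using compact unfolding prod_top_def compact_space_def[symmetric] compact_space_product_topology
    by blast
  show "topspace prod_top \<noteq> {}" using U_nonempty unfolding topspace_prod_top by (simp add: PiE_eq_empty_iff)
next
  fix f g assume "f \<in> topspace prod_top" "g \<in> topspace prod_top"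
  then show "pmul f g \<in> topspace prod_top"
    unfolding topspace_prod_top pmul_def using mul_closed by auto
  fix k assume "k \<in> topspace prod_top"
  then show "pmul (pmul f g) k = pmul f (pmul g k)"
    using \<open>f \<in> topspace prod_top\<close> \<open>g \<in> topspace prod_top\<close>
    unfolding topspace_prod_top pmul_def by (auto simp: fun_eq_iff PiE_iff mul_assoc)
next
  fix s assume s: "s \<in> topspace prod_top"
  show "continuous_map prod_top prod_top (\<lambda>f. pmul f s)"
    unfolding prod_top_def continuous_map_componentwise
  proof (intro conjI ballI)
    show "(\<lambda>f. pmul f s) ` topspace (product_topology (\<lambda>_. T) YY) \<subseteq> extensional YY"
      unfolding pmul_def by auto
    fix y :: "'m set set" assume y: "y \<in> YY"
    have "continuous_map prod_top T ((\<lambda>u. mul u (s y)) \<circ> (\<lambda>f. f y))"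
      using s y unfolding topspace_prod_top
      by (intro continuous_map_compose[OF continuous_map_prod_top_eval[OF y] continuous_mul_right])
        auto
    then show "continuous_map (product_topology (\<lambda>_. T) YY) T (\<lambda>f. pmul f s y)"
      unfolding pmul_def prod_top_def using y by (simp add: o_def)
  qed
qed

lemma prod_top_in_U: "f \<in> topspace prod_top \<Longrightarrow> y \<in> YY \<Longrightarrow> f y \<in> U"
  unfolding topspace_prod_top by auto

definition equivariant :: "('m set set \<Rightarrow> 'u) \<Rightarrow> bool" where
  "equivariant f \<longleftrightarrow> (\<forall>c. \<forall>y\<in>YY. f (Y_act c y) = act c (f y))"

definition admissible :: "('m set set \<Rightarrow> 'u) \<Rightarrow> bool" where
  "admissible f \<longleftrightarrow> f \<in> topspace prod_top \<and> equivariant f \<and> (\<forall>y\<in>YY. UNIV \<in> y \<longrightarrow> f y \<in> IU)"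

lemma closedin_admissible: "closedin prod_top {f \<in> topspace prod_top. admissible f}"
proof -
  have "closedin prod_top {f \<in> topspace prod_top. f (Y_act c y) = act c (f y)}" if "y \<in> YY" for c y
    using continuous_map_prod_top_eval[OF Y_act_YY[OF that]]
      continuous_map_compose[OF continuous_map_prod_top_eval[OF that] continuous_act]
    by (intro closedin_continuous_maps_eq[OF Hausdorff]) (simp_all add: o_def)
  then have "closedin prod_top {f \<in> topspace prod_top. \<forall>c\<in>UNIV. \<forall>y\<in>YY. f (Y_act c y) = act c (f y)}"
    by (intro closedin_Collect_Ball)
  then have "closedin prod_top {f \<in> topspace prod_top. equivariant f}"
    unfolding equivariant_def by simp
  moreover have "closedin prod_top {f \<in> topspace prod_top. \<forall>y\<in>YY. UNIV \<in> y \<longrightarrow> f y \<in> IU}"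
    by (intro closedin_Collect_Ball closedin_Collect_imp
        closedin_continuous_map_preimage[OF continuous_map_prod_top_eval smallest_compact_ideal(2)])
  ultimately show ?thesis unfolding admissible_def by (simp add: closedin_Collect_conj)
qed

lemma admissible_pmul:
  assumes f: "admissible f" and g: "admissible g"
  shows "admissible (pmul f g)"
  unfolding admissible_def
proof (intro conjI ballI impI)
  have "f \<in> topspace prod_top" "g \<in> topspace prod_top" using f g unfolding admissible_def by auto
  then show "pmul f g \<in> topspace prod_top"
    using compact_rt_subsemigroup_prod_top unfolding compact_rt_subsemigroup_def by blast
  show "equivariant (pmul f g)"
    unfolding equivariant_def
  proof (intro allI ballI)
    fix c :: 'm and y :: "'m set set" assume y: "y \<in> YY"
    then show "pmul f g (Y_act c y) = act c (pmul f g y)"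
      using f g Y_act_YY[OF y] act_mul prod_top_in_U \<open>f \<in> topspace prod_top\<close> \<open>g \<in> topspace prod_top\<close>
      unfolding admissible_def equivariant_def pmul_def by simp
  qed
  fix y :: "'m set set" assume "y \<in> YY" "UNIV \<in> y"
  then show "pmul f g y \<in> IU"
    using f IU_mul_right prod_top_in_U[OF \<open>g \<in> topspace prod_top\<close>] unfolding admissible_def pmul_def
    by simp
qed

lemma act_eq_if_range_eq:
  assumes right_zeros: "\<And>z z'. right_zero z \<Longrightarrow> right_zero z' \<Longrightarrow> act z e = act z' e"
    and "range ((*) a) = range ((*) b)"
  shows "act a e = act b e"
proof (cases "a = b")
  case False
  then have "right_zero a" "right_zero b"
    using R_equiv_imp_right_zero[OF almost_R_trivial] assms(2) by metis+
  then show ?thesis using right_zeros by blast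
qed simp

text \<open>The candidate \<open>y \<mapsto> a(e)\<close> where \<open>aM\<close> is the top of y; it is well defined when
  all right zeros agree on e, since these are the only elements with non-trivial R-class.\<close>
definition top_translate :: "'u \<Rightarrow> 'm set set \<Rightarrow> 'u" where
  "top_translate e y = act (X_rep (Y_top y)) e"

context
  fixes e assumes e: "e \<in> U" "mul e e = e"
    and right_zeros: "\<And>z z'. right_zero z \<Longrightarrow> right_zero z' \<Longrightarrow> act z e = act z' e"
begin

lemma top_translate_idempotent: "top_translate e y \<in> idempotents U mul"
  unfolding top_translate_def idempotents_def using act_in_U act_idempotent e by blast

lemma top_translate_equivariant:
  assumes y: "y \<in> YY"
  shows "top_translate e (Y_act c y) = act c (top_translate e y)"
proof -
  define r where "r = X_rep (Y_top y)"
  have "range ((*) (X_rep (Y_top (Y_act c y)))) = Y_top (Y_act c y)"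
    using range_X_rep[OF Y_top_XX[OF Y_act_YY[OF y]]] .
  also have "\<dots> = X_act c (range ((*) r))"
    unfolding Y_top_Y_act[OF y] r_def range_X_rep[OF Y_top_XX[OF y]] ..
  also have "\<dots> = range ((*) (c * r))" by (rule X_act_range)
  finally have "act (X_rep (Y_top (Y_act c y))) e = act (c * r) e"
    using act_eq_if_range_eq right_zeros by blast
  then show ?thesis unfolding top_translate_def r_def using act_mult e(1) by simp
qed

lemma top_translate_UNIV:
  assumes "y \<in> YY" and "UNIV \<in> y"
  shows "top_translate e y = e"
proof -
  have "range ((*) (X_rep (Y_top y))) = range ((*) 1)"
    using range_X_rep[OF Y_top_XX[OF assms(1)]] Y_top_UNIV[OF assms] by simp
  then show ?thesis
    unfolding top_translate_def using act_eq_if_range_eq[OF right_zeros] act_one e(1) by metis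
qed

end

definition coherent_upto :: "nat \<Rightarrow> ('m set set \<Rightarrow> 'u) \<Rightarrow> bool" where
  "coherent_upto k h \<longleftrightarrow> admissible h \<and> (\<forall>y\<in>YY. mul (h y) (h y) = h y) \<and>
     (\<forall>y\<in>YY. 2 \<le> card y \<longrightarrow> card y \<le> k \<longrightarrow> mul (h y) (h (Y_pred y)) = h y)"

lemma coherent_uptoD:
  assumes "coherent_upto k h"
  shows "admissible h" and "\<And>y. y \<in> YY \<Longrightarrow> h y \<in> U" and "\<And>y. y \<in> YY \<Longrightarrow> mul (h y) (h y) = h y"
    and "\<And>y. y \<in> YY \<Longrightarrow> 2 \<le> card y \<Longrightarrow> card y \<le> k \<Longrightarrow> mul (h y) (h (Y_pred y)) = h y"
  using assms prod_top_in_U unfolding coherent_upto_def admissible_def by simp_all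

lemma coherent_upto_1: "\<exists>h. coherent_upto 1 h"
proof -
  obtain e0 where e0: "e0 \<in> U" "mul e0 e0 = e0" "\<And>J. two_sided_ideal U mul J \<Longrightarrow> e0 \<in> J"
    and right_zeros: "\<And>z z'. right_zero z \<Longrightarrow> right_zero z' \<Longrightarrow> act z e0 = act z' e0"
    using minimal_idempotent by metis
  define h where "h = restrict (top_translate e0) YY"
  have "admissible h"
    unfolding admissible_def equivariant_def topspace_prod_top
  proof (intro conjI allI ballI impI)
    show "h \<in> (\<Pi>\<^sub>E y\<in>YY. U)"
      unfolding h_def using top_translate_idempotent[OF e0(1,2) right_zeros] by (auto simp: idempotents_def)
    fix c :: 'm and y :: "'m set set" assume "y \<in> YY"
    then show "h (Y_act c y) = act c (h y)"
      unfolding h_def using top_translate_equivariant[OF e0(1,2) right_zeros] Y_act_YY[OF \<open>y \<in> YY\<close>]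
      by simp
  next
    fix y :: "'m set set" assume "y \<in> YY" "UNIV \<in> y"
    then show "h y \<in> IU"
      unfolding h_def using top_translate_UNIV[OF e0(1,2) right_zeros] e0(3)[OF smallest_compact_ideal(1)]
      by simp
  qed
  moreover have "\<forall>y\<in>YY. mul (h y) (h y) = h y"
    unfolding h_def using top_translate_idempotent[OF e0(1,2) right_zeros] by (simp add: idempotents_def)
  ultimately show ?thesis unfolding coherent_upto_def by auto
qed

lemma chain_prod_coherent:
  assumes "coherent_upto k h" and "y \<in> YY" and "card y \<le> k"
  shows "chain_prod mul h y = h y"
  using assms(2,3)
proof (induction rule: YY_induct)
  case (pred y)
  then have "chain_prod mul h (Y_pred y) = h (Y_pred y)" using card_Y_pred[OF pred(1)] by simp
  then show ?case
    using chain_prod_pred[OF pred(1,2), of mul h] coherent_uptoD(4)[OF assms(1) pred(1,2) pred(4)]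
    by simp
qed (simp add: chain_prod_single)

text \<open>For f in this set and y of length k + 1 the last condition is coherence of f at y, since
  f agrees with h on \<open>Y_pred y\<close>; unlike coherence, it is visibly preserved by products.\<close>
definition extensions :: "nat \<Rightarrow> ('m set set \<Rightarrow> 'u) \<Rightarrow> ('m set set \<Rightarrow> 'u) set" where
  "extensions k h = {f \<in> topspace prod_top. admissible f \<and> (\<forall>y\<in>YY. card y \<le> k \<longrightarrow> f y = h y) \<and>
     (\<forall>y\<in>YY. card y = Suc k \<longrightarrow> mul (f y) (h (Y_pred y)) = f y)}"

lemma closedin_extensions:
  assumes "1 \<le> k" and "coherent_upto k h"
  shows "closedin prod_top (extensions k h)"
proof -
  have "closedin prod_top {f \<in> topspace prod_top. \<forall>y\<in>YY. card y \<le> k \<longrightarrow> f y = h y}"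
    using coherent_uptoD(2)[OF assms(2)]
    by (intro closedin_Collect_Ball closedin_Collect_imp closedin_continuous_maps_eq[OF Hausdorff]
        continuous_map_prod_top_eval) auto
  moreover have "closedin prod_top {f \<in> topspace prod_top. card y = Suc k \<longrightarrow> mul (f y) (h (Y_pred y)) = f y}"
    if y: "y \<in> YY" for y
  proof (cases "card y = Suc k")
    case True
    then have "h (Y_pred y) \<in> U"
      using assms(1) Y_pred_YY[OF y] coherent_uptoD(2)[OF assms(2)] by simp
    then have "continuous_map prod_top T ((\<lambda>u. mul u (h (Y_pred y))) \<circ> (\<lambda>f. f y))"
      by (intro continuous_map_compose[OF continuous_map_prod_top_eval[OF y] continuous_mul_right])
    then show ?thesis
      using closedin_continuous_maps_eq[OF Hausdorff _ continuous_map_prod_top_eval[OF y]] True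
      by (simp add: o_def)
  qed simp
  then have "closedin prod_top {f \<in> topspace prod_top. \<forall>y\<in>YY. card y = Suc k \<longrightarrow> mul (f y) (h (Y_pred y)) = f y}"
    by (rule closedin_Collect_Ball)
  ultimately show ?thesis
    unfolding extensions_def by (intro closedin_Collect_conj closedin_admissible)
qed

lemma extensions_pmul:
  assumes "1 \<le> k" and h: "coherent_upto k h" and f: "f \<in> extensions k h" and g: "g \<in> extensions k h"
  shows "pmul f g \<in> extensions k h"
proof -
  have "f \<in> topspace prod_top" "g \<in> topspace prod_top" "admissible f" "admissible g"
    using f g unfolding extensions_def by auto
  note fU = prod_top_in_U[OF \<open>f \<in> topspace prod_top\<close>] and gU = prod_top_in_U[OF \<open>g \<in> topspace prod_top\<close>]
  have "pmul f g y = h y" if "y \<in> YY" "card y \<le> k" for y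
    using f g that coherent_uptoD(3)[OF h] unfolding extensions_def pmul_def by simp
  moreover have "mul (pmul f g y) (h (Y_pred y)) = pmul f g y" if y: "y \<in> YY" "card y = Suc k" for y
  proof -
    have "2 \<le> card y" using assms(1) y(2) by simp
    then have "h (Y_pred y) \<in> U" using coherent_uptoD(2)[OF h Y_pred_YY[OF y(1)]] by simp
    then have "mul (pmul f g y) (h (Y_pred y)) = mul (f y) (mul (g y) (h (Y_pred y)))"
      unfolding pmul_def using y fU gU mul_assoc by simp
    then show ?thesis using g y unfolding extensions_def pmul_def by simp
  qed
  moreover have "admissible (pmul f g)" by (rule admissible_pmul[OF \<open>admissible f\<close> \<open>admissible g\<close>])
  moreover then have "pmul f g \<in> topspace prod_top" unfolding admissible_def by blast
  ultimately show ?thesis unfolding extensions_def by blast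
qed

lemma chain_prod_extension:
  assumes "1 \<le> k" and h: "coherent_upto k h"
  shows "restrict (chain_prod mul h) YY \<in> extensions k h"
proof -
  note hU = coherent_uptoD(2)[OF h] and hid = coherent_uptoD(3)[OF h]
  have closed: "\<And>y. y \<in> YY \<Longrightarrow> chain_prod mul h y \<in> U"
    by (rule chain_prod_in[OF mul_closed mul_assoc hU hid])
  have "admissible (restrict (chain_prod mul h) YY)"
    unfolding admissible_def equivariant_def topspace_prod_top
  proof (intro conjI allI ballI impI)
    show "restrict (chain_prod mul h) YY \<in> (\<Pi>\<^sub>E y\<in>YY. U)" using closed by simp
  next
    fix c :: 'm and y :: "'m set set" assume "y \<in> YY"
    have "\<And>y. y \<in> YY \<Longrightarrow> h (Y_act c y) = act c (h y)"
      using coherent_uptoD(1)[OF h] unfolding admissible_def equivariant_def by blast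
    from chain_prod_equivariant[where m=mul and h=h and act=act and c=c,
        OF mul_closed mul_assoc hU hid act_mul this \<open>y \<in> YY\<close>]
    show "restrict (chain_prod mul h) YY (Y_act c y) = act c (restrict (chain_prod mul h) YY y)"
      using \<open>y \<in> YY\<close> Y_act_YY[OF \<open>y \<in> YY\<close>] by simp
  next
    fix y :: "'m set set" assume "y \<in> YY" "UNIV \<in> y"
    then have "h y \<in> IU" using coherent_uptoD(1)[OF h] unfolding admissible_def by blast
    show "restrict (chain_prod mul h) YY y \<in> IU"
    proof (cases "2 \<le> card y")
      case True
      then show ?thesis
        using \<open>y \<in> YY\<close> \<open>h y \<in> IU\<close> chain_prod_pred[OF \<open>y \<in> YY\<close> True, of mul h]
          IU_mul_right[OF closed[OF Y_pred_YY[OF \<open>y \<in> YY\<close> True]]] by simp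
    qed (use \<open>y \<in> YY\<close> \<open>h y \<in> IU\<close> chain_prod_single[of y mul h] in simp)
  qed
  moreover have "mul (chain_prod mul h y) (h (Y_pred y)) = chain_prod mul h y"
    if y: "y \<in> YY" "card y = Suc k" for y
  proof -
    have "2 \<le> card y" using assms(1) y(2) by simp
    then have "Y_pred y \<in> YY" "card (Y_pred y) = k" using y by (simp_all add: Y_pred_YY card_Y_pred)
    then have "chain_prod mul h y = mul (h y) (h (Y_pred y))"
      using chain_prod_pred[OF y(1) \<open>2 \<le> card y\<close>, of mul h] chain_prod_coherent[OF h] by simp
    then show ?thesis using mul_assoc hU hid y(1) \<open>Y_pred y \<in> YY\<close> by simp
  qed
  ultimately show ?thesis
    using chain_prod_coherent[OF h] unfolding extensions_def admissible_def by auto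
qed

text \<open>Any idempotent of the compact semigroup of extensions is coherent one level higher.\<close>
lemma coherent_upto_Suc:
  assumes "1 \<le> k" and h: "coherent_upto k h"
  shows "\<exists>h'. coherent_upto (Suc k) h'"
proof -
  have "extensions k h \<subseteq> topspace prod_top" unfolding extensions_def by blast
  moreover have "compactin prod_top (extensions k h)"
    using compact_rt_subsemigroup_prod_top closedin_extensions[OF assms]
    unfolding compact_rt_subsemigroup_def by (metis closed_compactin closedin_subset)
  ultimately have "compact_rt_subsemigroup prod_top pmul (extensions k h)"
    using chain_prod_extension[OF assms] extensions_pmul[OF assms]
    by (intro compact_rt_subsemigroup_subset[OF compact_rt_subsemigroup_prod_top]) auto
  then obtain f where f: "f \<in> extensions k h" "pmul f f = f"
    using compact_rt_subsemigroup_idempotent[OF Hausdorff_prod_top] by blast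
  have "mul (f y) (f y) = f y" if "y \<in> YY" for y
  proof -
    have "pmul f f y = f y" using f(2) by simp
    then show ?thesis using that unfolding pmul_def by simp
  qed
  moreover have "mul (f y) (f (Y_pred y)) = f y"
    if y: "y \<in> YY" "2 \<le> card y" "card y \<le> Suc k" for y
  proof -
    have "Y_pred y \<in> YY" "card (Y_pred y) \<le> k" using Y_pred_YY[OF y(1,2)] card_Y_pred[OF y(1)] y(3) by auto
    then have "f (Y_pred y) = h (Y_pred y)" using f(1) unfolding extensions_def by blast
    with f(1) y coherent_uptoD(4)[OF h] show ?thesis
      unfolding extensions_def by (cases "card y \<le> k") auto
  qed
  ultimately have "coherent_upto (Suc k) f"
    using f(1) unfolding coherent_upto_def extensions_def by blast
  then show ?thesis by blast
qed

lemma coherent_upto_card_XX: "\<exists>h. coherent_upto (card (XX :: 'm set set)) h"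
proof -
  have "1 \<le> card (XX :: 'm set set)"
    using UNIV_in_XX finite_XX by (metis One_nat_def Suc_leI card_gt_0_iff empty_iff)
  then show ?thesis
  proof (induction rule: nat_induct_at_least)
    case base then show ?case by (rule coherent_upto_1)
  next
    case (Suc k) then show ?case using coherent_upto_Suc by blast
  qed
qed

definition equivariant_order_reversing :: "('m set set \<Rightarrow> 'u) \<Rightarrow> bool" where
  "equivariant_order_reversing g \<longleftrightarrow>
     (\<forall>y\<in>YY. g y \<in> idempotents U mul) \<and> (\<forall>a. \<forall>y\<in>YY. g (Y_act a y) = act a (g y)) \<and>
     (\<forall>x\<in>YY. \<forall>y\<in>YY. Y_le x y \<longrightarrow> idem_le mul (g y) (g x)) \<and> (\<forall>y. Y_maximal y \<longrightarrow> g y \<in> IU)"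

context
  fixes h assumes h: "coherent_upto (card (XX :: 'm set set)) h"
begin

lemma coherent_Y_pred: "y \<in> YY \<Longrightarrow> 2 \<le> card y \<Longrightarrow> mul (h y) (h (Y_pred y)) = h y"
  using coherent_uptoD(4)[OF h] card_YY_le_card_XX by blast

lemma coherent_Y_le:
  assumes x: "x \<in> YY" and "y \<in> YY" and "Y_le x y"
  shows "mul (h y) (h x) = h y"
  using \<open>y \<in> YY\<close> \<open>Y_le x y\<close>
proof (induction rule: YY_induct)
  case (single y)
  then have "x = y" using Y_le_imp_Y_le_Y_pred(1)[OF x] by fastforce
  then show ?case using coherent_uptoD(3)[OF h single(1)] by simp
next
  case (pred y)
  show ?case
  proof (cases "x = y")
    case False
    then have "mul (h (Y_pred y)) (h x) = h (Y_pred y)"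
      using pred Y_le_imp_Y_le_Y_pred(2)[OF x pred(1)] by blast
    then show ?thesis
      using coherent_Y_pred[OF pred(1,2)] mul_assoc coherent_uptoD(2)[OF h] x pred(1)
        Y_pred_YY[OF pred(1,2)] by metis
  qed (use coherent_uptoD(3)[OF h pred(1)] in simp)
qed

text \<open>With the multiplication flipped, the chain product runs from the bottom of the chain
  up to y.\<close>
abbreviation g :: "'m set set \<Rightarrow> 'u" where
  "g \<equiv> chain_prod (\<lambda>u v. mul v u) h"

lemma g_in_U: "y \<in> YY \<Longrightarrow> g y \<in> U"
  by (rule chain_prod_in[where m="\<lambda>u v. mul v u", OF mul_closed mul_assoc[symmetric]
        coherent_uptoD(2,3)[OF h]])

lemma g_pred: "y \<in> YY \<Longrightarrow> 2 \<le> card y \<Longrightarrow> g y = mul (g (Y_pred y)) (h y)"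
  by (rule chain_prod_pred)

lemma g_single: "\<not> 2 \<le> card y \<Longrightarrow> g y = h y"
  by (rule chain_prod_single)

lemma h_mul_g:
  assumes "x \<in> YY" and y: "y \<in> YY" and "Y_le x y"
  shows "mul (h y) (g x) = h y"
  using \<open>x \<in> YY\<close> \<open>Y_le x y\<close>
proof (induction rule: YY_induct)
  case (single x)
  then show ?case using coherent_Y_le[OF single(1) y] g_single by simp
next
  case (pred x)
  have "Y_le (Y_pred x) y" using Y_le_trans[OF Y_le_Y_pred[OF pred(1)] pred(4)] .
  then have "mul (h y) (g (Y_pred x)) = h y" using pred(3) by blast
  then show ?case
    using g_pred[OF pred(1,2)] mul_assoc coherent_uptoD(2)[OF h] g_in_U Y_pred_YY[OF pred(1,2)]
      coherent_Y_le[OF pred(1) y pred(4)] y pred(1) by metis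
qed

lemma g_idempotent: "y \<in> YY \<Longrightarrow> mul (g y) (g y) = g y"
proof (induction rule: YY_induct)
  case (single y)
  then show ?case using g_single coherent_uptoD(3)[OF h] by simp
next
  case (pred y)
  define a b where "a = g (Y_pred y)" and "b = h y"
  have "a \<in> U" "b \<in> U" using g_in_U Y_pred_YY[OF pred(1,2)] coherent_uptoD(2)[OF h pred(1)]
    unfolding a_def b_def by auto
  have "mul b a = b" "mul b b = b"
    unfolding a_def b_def using h_mul_g[OF Y_pred_YY[OF pred(1,2)] pred(1) Y_le_Y_pred[OF pred(1)]]
      coherent_uptoD(3)[OF h pred(1)] by auto
  then have "mul (mul a b) (mul a b) = mul a b"
    using mul_assoc mul_closed \<open>a \<in> U\<close> \<open>b \<in> U\<close> by metis
  then show ?case using g_pred[OF pred(1,2)] unfolding a_def b_def by simp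
qed

lemma g_le_g_pred:
  assumes y: "y \<in> YY" and "2 \<le> card y"
  shows "idem_le mul (g y) (g (Y_pred y))"
proof -
  define a b where "a = g (Y_pred y)" and "b = h y"
  have "a \<in> U" "b \<in> U" using g_in_U Y_pred_YY[OF assms] coherent_uptoD(2)[OF h y]
    unfolding a_def b_def by auto
  have "mul a a = a" "mul b a = b"
    unfolding a_def b_def using g_idempotent Y_pred_YY[OF assms] h_mul_g[OF _ y Y_le_Y_pred[OF y]]
    by auto
  then have "mul (mul a b) a = mul a b" "mul a (mul a b) = mul a b"
    using mul_assoc \<open>a \<in> U\<close> \<open>b \<in> U\<close> by metis+
  then show ?thesis using g_pred[OF assms] unfolding idem_le_def a_def b_def by simp
qed

lemma g_antitone:
  assumes x: "x \<in> YY" and "y \<in> YY" and "Y_le x y"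
  shows "idem_le mul (g y) (g x)"
  using \<open>y \<in> YY\<close> \<open>Y_le x y\<close>
proof (induction rule: YY_induct)
  case (single y)
  then have "x = y" using Y_le_imp_Y_le_Y_pred(1)[OF x] by fastforce
  then show ?case using g_idempotent[OF x] unfolding idem_le_def by simp
next
  case (pred y)
  show ?case
  proof (cases "x = y")
    case False
    then have "idem_le mul (g (Y_pred y)) (g x)"
      using pred Y_le_imp_Y_le_Y_pred(2)[OF x pred(1)] by blast
    then show ?thesis
      using idem_le_trans g_le_g_pred[OF pred(1,2)] g_in_U x pred(1) Y_pred_YY[OF pred(1,2)] by blast
  qed (use g_idempotent[OF pred(1)] in \<open>simp add: idem_le_def\<close>)
qed

lemma equivariant_order_reversing_g: "equivariant_order_reversing g"
  unfolding equivariant_order_reversing_def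
proof (intro conjI allI ballI impI)
  fix y :: "'m set set" assume "y \<in> YY"
  then show "g y \<in> idempotents U mul" unfolding idempotents_def using g_in_U g_idempotent by blast
  fix a :: 'm
  have "\<And>y. y \<in> YY \<Longrightarrow> h (Y_act a y) = act a (h y)"
    using coherent_uptoD(1)[OF h] unfolding admissible_def equivariant_def by blast
  from chain_prod_equivariant[where m="\<lambda>u v. mul v u" and h=h and act=act and c=a,
      OF mul_closed mul_assoc[symmetric] coherent_uptoD(2,3)[OF h] act_mul this \<open>y \<in> YY\<close>]
  show "g (Y_act a y) = act a (g y)" .
next
  fix x y :: "'m set set" assume "x \<in> YY" "y \<in> YY" "Y_le x y"
  then show "idem_le mul (g y) (g x)" by (rule g_antitone)
next
  fix y :: "'m set set" assume "Y_maximal y"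
  then have "y \<in> YY" "UNIV \<in> y" using Y_maximal_UNIV unfolding Y_maximal_def by blast+
  then have "h y \<in> IU" using coherent_uptoD(1)[OF h] unfolding admissible_def by blast
  show "g y \<in> IU"
  proof (cases "2 \<le> card y")
    case True
    then show ?thesis
      using g_pred[OF \<open>y \<in> YY\<close> True] IU_mul_left[OF g_in_U \<open>h y \<in> IU\<close>] Y_pred_YY[OF \<open>y \<in> YY\<close> True]
      by simp
  qed (use g_single \<open>h y \<in> IU\<close> in simp)
qed

end

text \<open>If \<open>\<X>(M)\<close> has at most two elements then every element m of M either generates M
  as a right ideal or is a right zero, so in both cases e0 \<le> m(e0) for the minimal idempotent e0,
  and translating e0 by a generator of the top of y is order reversing.\<close>
lemma equivariant_order_reversing_top_translate:
  assumes "card (XX :: 'm set set) \<le> 2"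
  obtains g where "equivariant_order_reversing g"
    and "\<And>y e. Y_maximal y \<Longrightarrow> e \<in> idempotents U mul \<Longrightarrow> idem_le mul e (g y) \<Longrightarrow> e = g y"
proof -
  obtain e0 where e0: "e0 \<in> U" "mul e0 e0 = e0" "\<And>J. two_sided_ideal U mul J \<Longrightarrow> e0 \<in> J"
    and minimal: "\<And>f. f \<in> U \<Longrightarrow> mul f f = f \<Longrightarrow> idem_le mul f e0 \<Longrightarrow> f = e0"
    and right_zeros: "\<And>z z'. right_zero z \<Longrightarrow> right_zero z' \<Longrightarrow> act z e0 = act z' e0"
    and below: "\<And>z. right_zero z \<Longrightarrow> idem_le mul e0 (act z e0)"
    using minimal_idempotent by metis
  have e0_le: "idem_le mul e0 (act m e0)" for m :: 'm
  proof (cases "range ((*) m) = (UNIV :: 'm set)")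
    case True
    then have "act m e0 = act 1 e0" using act_eq_if_range_eq[OF right_zeros] by simp
    then show ?thesis using act_one e0(1,2) unfolding idem_le_def by simp
  next
    case False
    then show ?thesis using below right_zero_if_card_XX_le_2[OF assms almost_R_trivial] by blast
  qed
  define g where "g = top_translate e0"
  have g_max: "g y = e0" if "Y_maximal y" for y
    using that top_translate_UNIV[OF e0(1,2) right_zeros] Y_maximal_UNIV
    unfolding g_def Y_maximal_def by blast
  have "idem_le mul (g y) (g x)" if xy: "x \<in> YY" "y \<in> YY" "Y_le x y" for x y
  proof -
    obtain m where "X_rep (Y_top x) = X_rep (Y_top y) * m"
      using Y_le_imp_Y_top_subset[OF xy] range_X_rep[OF Y_top_XX[OF \<open>x \<in> YY\<close>]]
        range_X_rep[OF Y_top_XX[OF \<open>y \<in> YY\<close>]] by (metis mult.right_neutral rangeE rangeI subsetD)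
    then show ?thesis
      unfolding g_def top_translate_def
      using act_idem_le[OF e0(1) act_in_U[OF e0(1)] e0_le] act_mult e0(1) by simp
  qed
  then have "equivariant_order_reversing g"
    unfolding equivariant_order_reversing_def g_def
    using top_translate_idempotent[OF e0(1,2) right_zeros] top_translate_equivariant[OF e0(1,2) right_zeros]
      g_max e0(3)[OF smallest_compact_ideal(1)] by (simp add: g_def)
  moreover have "e = g y" if "Y_maximal y" "e \<in> idempotents U mul" "idem_le mul e (g y)" for y e
    using that minimal g_max unfolding idempotents_def by simp
  ultimately show ?thesis using that by blast
qed

lemma exists_equivariant_order_reversing:
  "\<exists>g. equivariant_order_reversing g \<and>
     (card (XX :: 'm set set) \<le> 2 \<longrightarrow>
       (\<forall>y. Y_maximal y \<longrightarrow> (\<forall>e\<in>idempotents U mul. idem_le mul e (g y) \<longrightarrow> e = g y)))"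
proof (cases "card (XX :: 'm set set) \<le> 2")
  case True
  then show ?thesis using equivariant_order_reversing_top_translate by metis
next
  case False
  obtain h where "coherent_upto (card (XX :: 'm set set)) h" using coherent_upto_card_XX by blast
  then show ?thesis using equivariant_order_reversing_g False by blast
qed

end

theorem theorem2p4:
  fixes T :: "'u topology" and mul :: "'u \<Rightarrow> 'u \<Rightarrow> 'u"
    and act :: "'m::{monoid_mult, finite} \<Rightarrow> 'u \<Rightarrow> 'u"
  assumes "compact_right_topological_semigroup T mul"
    and "almost_R_trivial TYPE('m)"
    and "acts_by_continuous_endomorphisms T mul act"
  shows "\<exists>g. (\<forall>y\<in>(YY :: 'm set set set). g y \<in> idempotents (topspace T) mul) \<and>
             (\<forall>a. \<forall>y\<in>(YY :: 'm set set set). g (Y_act a y) = act a (g y)) \<and>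
             (\<forall>x\<in>(YY :: 'm set set set). \<forall>y\<in>YY. Y_le x y \<longrightarrow> idem_le mul (g y) (g x)) \<and>
             (\<forall>y::'m set set. Y_maximal y \<longrightarrow> g y \<in> smallest_compact_ideal T mul) \<and>
             (card (XX :: 'm set set) \<le> 2 \<longrightarrow>
                (\<forall>y::'m set set. Y_maximal y \<longrightarrow>
                   (\<forall>e\<in>idempotents (topspace T) mul. idem_le mul e (g y) \<longrightarrow> e = g y)))"
proof -
  interpret compact_semigroup_action T mul act using assms by unfold_locales
  show ?thesis
    using exists_equivariant_order_reversing unfolding equivariant_order_reversing_def by blast
qed

end
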